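(* Let $M$ be a matroid, $\psi\colon E(M)\to\Gamma$ a labeling to an abelian group $\Gamma$, and $w\colon E(M)\to\mathbb{R}$ a weight function. Suppose $M$ has at least one non-zero basis. Then for every minimum-weight basis $B$ of $M$ there exists a non-zero basis $B^*$ of $M$ that has minimum weight among all non-zero bases and satisfies $|B\setminus B^*|\le 1$.
   Context: For $S\subseteq E$, $\psi(S):=\sum_{x\in S}\psi(x)$ and $w(S):=\sum_{x\in S}w(x)$. A set $S$ is non-zero if $\psi(S)\neq 0$. *)

theory Defs
  imports Complex_Main
begin

definition matroid :: "'a set \<Rightarrow> ('a set \<Rightarrow> bool) \<Rightarrow> bool" where
  "matroid E indep \<longleftrightarrow>
     finite E \<and>
     indep {} \<and>
     (\<forall>X. indep X \<longrightarrow> X \<subseteq> E) \<and>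
     (\<forall>X Y. indep X \<and> Y \<subseteq> X \<longrightarrow> indep Y) \<and>
     (\<forall>X Y. indep X \<and> indep Y \<and> card X < card Y \<longrightarrow>
        (\<exists>y \<in> Y - X. indep (insert y X)))"

definition basis :: "('a set \<Rightarrow> bool) \<Rightarrow> 'a set \<Rightarrow> bool" where
  "basis indep B \<longleftrightarrow> indep B \<and> (\<forall>X. indep X \<and> B \<subseteq> X \<longrightarrow> X = B)"

definition nonzero :: "('a \<Rightarrow> 'g::ab_group_add) \<Rightarrow> 'a set \<Rightarrow> bool" where
  "nonzero \<psi> S \<longleftrightarrow> (\<Sum>x\<in>S. \<psi> x) \<noteq> 0"

end

theory Submission
  imports Defs
begin

text \<open>Let \<open>B\<^sup>*\<close> be a minimum-weight non-zero basis with \<open>|B - B\<^sup>*|\<close> as small as possible.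
  If \<open>B\<close> itself is non-zero we are done, so let \<open>\<psi>(B) = 0\<close>; then \<open>B\<^sup>* \<noteq> B\<close>. Symmetric basis
  exchange for some \<open>x \<in> B\<^sup>* - B\<close> yields \<open>y \<in> B - B\<^sup>*\<close> such that \<open>T = B\<^sup>* - x + y\<close> and
  \<open>B' = B - y + x\<close> are bases. Their weights add up to \<open>w(B\<^sup>*) + w(B)\<close>, and both weigh at least
  \<open>w(B)\<close>, so both weigh at most \<open>w(B\<^sup>*)\<close>. Their labels add up to \<open>\<psi>(B\<^sup>*) \<noteq> 0\<close>, so one of them
  is non-zero. A non-zero \<open>T\<close> would contradict the minimality of \<open>|B - B\<^sup>*|\<close>, hence \<open>B'\<close> is a
  minimum-weight non-zero basis, and \<open>B - B' = {y}\<close>.\<close>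

lemma card_insert_remove:
  assumes "finite X" "b \<in> X" "a \<notin> X"
  shows "card (insert a (X - {b})) = card X"
proof -
  have "0 < card X" using assms(1,2) card_gt_0_iff by blast
  then show ?thesis using assms by (simp add: card_Diff_singleton)
qed

lemma sum_insert_remove:
  fixes f :: "'a \<Rightarrow> 'b::ab_group_add"
  assumes "finite X" "b \<in> X" "a \<notin> X"
  shows "sum f (insert a (X - {b})) = sum f X - f b + f a"
  using assms by (simp add: sum_diff1)

locale finite_matroid =
  fixes E :: "'a set" and indep :: "'a set \<Rightarrow> bool"
  assumes matroid: "matroid E indep"
begin

lemma finite_ground: "finite E"
  using matroid unfolding matroid_def by blast

lemma indep_subset_ground: "indep X \<Longrightarrow> X \<subseteq> E"
  using matroid unfolding matroid_def by blast

lemma indep_finite: "indep X \<Longrightarrow> finite X"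
  using finite_ground indep_subset_ground finite_subset by blast

lemma indep_subset: "indep X \<Longrightarrow> Y \<subseteq> X \<Longrightarrow> indep Y"
  using matroid unfolding matroid_def by blast

lemma indep_augment:
  "indep X \<Longrightarrow> indep Y \<Longrightarrow> card X < card Y \<Longrightarrow> \<exists>y \<in> Y - X. indep (insert y X)"
  using matroid unfolding matroid_def by blast

lemma indep_augment_to_card:
  assumes "indep I" "indep J" "card I \<le> card J"
  shows "\<exists>I'. I \<subseteq> I' \<and> I' \<subseteq> I \<union> J \<and> indep I' \<and> card I' = card J"
  using assms
proof (induction "card J - card I" arbitrary: I)
  case 0
  then show ?case by (intro exI[of _ I]) auto
next
  case (Suc n)
  then have "card I < card J" by linarith
  then obtain y where y: "y \<in> J - I" "indep (insert y I)"
    using indep_augment Suc.prems(1,2) by blast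
  moreover have "card (insert y I) = Suc (card I)"
    using y(1) indep_finite[OF Suc.prems(1)] by simp
  ultimately have "n = card J - card (insert y I)" "card (insert y I) \<le> card J"
    using Suc.hyps(2) by linarith+
  then obtain I' where "insert y I \<subseteq> I'" "I' \<subseteq> insert y I \<union> J" "indep I'" "card I' = card J"
    using Suc.hyps(1) y(2) Suc.prems(2) by blast
  then show ?case using y by blast
qed

lemma finite_bases: "finite {X. basis indep X}"
proof (rule finite_subset)
  show "{X. basis indep X} \<subseteq> Pow E" using indep_subset_ground unfolding basis_def by blast
qed (simp add: finite_ground)

lemma card_le_basis_card:
  assumes "basis indep B" "indep X"
  shows "card X \<le> card B"
proof (rule ccontr)
  assume "\<not> card X \<le> card B"
  then obtain y where "y \<in> X - B" "indep (insert y B)"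
    using indep_augment assms unfolding basis_def by (meson not_le)
  then show False using assms(1) unfolding basis_def by blast
qed

lemma basis_if_card_eq:
  assumes "basis indep B" "indep X" "card X = card B"
  shows "basis indep X"
  unfolding basis_def
proof (intro conjI allI impI)
  fix Z assume "indep Z \<and> X \<subseteq> Z"
  moreover then have "card Z \<le> card X"
    using card_le_basis_card[OF assms(1)] assms(3) by simp
  ultimately show "Z = X" using card_seteq[of Z X] indep_finite by blast
qed fact

text \<open>For independent \<open>I\<close>, \<open>spans I S\<close> says that \<open>S\<close> lies in the closure of \<open>I\<close>.\<close>

definition spans :: "'a set \<Rightarrow> 'a set \<Rightarrow> bool" where
  "spans I S \<longleftrightarrow> (\<forall>e \<in> S - I. \<not> indep (insert e I))"

lemma card_le_if_spans:
  assumes "indep I" "spans I S" "indep J" "J \<subseteq> I \<union> S"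
  shows "card J \<le> card I"
proof (rule ccontr)
  assume "\<not> card J \<le> card I"
  then obtain y where "y \<in> J - I" "indep (insert y I)"
    using indep_augment assms(1,3) by (meson not_le)
  then show False using assms(2,4) unfolding spans_def by blast
qed

lemma indep_insert_if_spans_remove:
  assumes X: "indep X" "x \<in> X" and K: "indep K" "spans (X - {x}) K"
  shows "indep (insert x K)"
proof (rule ccontr)
  \<comment> \<open>Otherwise \<open>x\<close> lies in the closure of \<open>K\<close>, hence of \<open>X - {x}\<close>, so \<open>X - {x}\<close> would span \<open>X\<close>.\<close>
  assume dep: "\<not> indep (insert x K)"
  let ?X' = "X - {x}"
  have indep_X': "indep ?X'" using indep_subset X(1) by blast
  have bound: "card J \<le> card ?X'" if "indep J" "J \<subseteq> ?X' \<union> K" for J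
    using card_le_if_spans[OF indep_X' K(2) that] .
  obtain I where I: "K \<subseteq> I" "I \<subseteq> K \<union> ?X'" "indep I" "card I = card ?X'"
    using indep_augment_to_card[OF K(1) indep_X' bound[OF K(1)]] by auto
  have "spans I (insert x (K \<union> ?X'))"
    unfolding spans_def
  proof (intro ballI notI)
    fix e assume e: "e \<in> insert x (K \<union> ?X') - I" and indep_e: "indep (insert e I)"
    show False
    proof (cases "e = x")
      case True
      then show False using dep indep_subset[OF indep_e] I(1) by blast
    next
      case False
      then have "card (insert e I) \<le> card ?X'" using bound[OF indep_e] e I(2) by blast
      then show False using e I(4) indep_finite[OF I(3)] by simp
    qed
  qed
  then have "card X \<le> card I" using card_le_if_spans[OF I(3) _ X(1)] by blast
  moreover have "0 < card X" using X(2) indep_finite[OF X(1)] card_gt_0_iff by blast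
  ultimately show False using I(4) X(2) by (simp add: card_Diff_singleton)
qed

lemma basis_exchange_symmetric:
  assumes X: "basis indep X" and Y: "basis indep Y" and x: "x \<in> X" "x \<notin> Y"
  shows "\<exists>y \<in> Y - X. basis indep (insert y (X - {x})) \<and> basis indep (insert x (Y - {y}))"
proof -
  have indep_X: "indep X" and indep_Y: "indep Y" using X Y unfolding basis_def by auto
  have fin_X: "finite X" and fin_Y: "finite Y" using indep_finite indep_X indep_Y by auto
  \<comment> \<open>\<open>T\<close> holds the candidates for \<open>y\<close> on the \<open>X\<close> side; the rest \<open>K\<close> of \<open>Y\<close> is spanned by \<open>X - {x}\<close>,
    so \<open>insert x K\<close> is independent, and extending it inside \<open>Y\<close> to a basis omits some \<open>y \<in> T\<close>.\<close>
  define T where "T = {y \<in> Y - X. indep (insert y (X - {x}))}"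
  define K where "K = Y - T"
  have "spans (X - {x}) K" using x unfolding spans_def K_def T_def by blast
  then have indep_xK: "indep (insert x K)"
    using indep_insert_if_spans_remove[OF indep_X x(1)] indep_subset[OF indep_Y] K_def by blast
  obtain I where I: "insert x K \<subseteq> I" "I \<subseteq> insert x K \<union> Y" "indep I" "card I = card Y"
    using indep_augment_to_card[OF indep_xK indep_Y card_le_basis_card[OF Y indep_xK]] by blast
  have "\<not> Y \<subseteq> I"
  proof
    assume "Y \<subseteq> I"
    then have "card (insert x Y) \<le> card I" using I(1) indep_finite[OF I(3)] by (simp add: card_mono)
    then show False using x(2) fin_Y I(4) by simp
  qed
  then obtain y where y: "y \<in> Y" "y \<notin> I" by blast
  then have "y \<in> T" using I(1) unfolding K_def by blast
  then have y_T: "y \<in> Y - X" "indep (insert y (X - {x}))" unfolding T_def by blast+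
  have "I \<subseteq> insert x (Y - {y})" using I(2) y(2) unfolding K_def by blast
  then have "I = insert x (Y - {y})"
    using card_insert_remove[OF fin_Y y(1) x(2)] I(4) fin_Y by (intro card_subset_eq) auto
  then have "basis indep (insert x (Y - {y}))" using basis_if_card_eq[OF Y] I(3,4) by simp
  moreover have "basis indep (insert y (X - {x}))"
    using y_T by (intro basis_if_card_eq[OF X] card_insert_remove[OF fin_X x(1)]) auto
  ultimately show ?thesis using y_T by blast
qed

lemma nonzero_basis_exchange_step:
  fixes \<psi> :: "'a \<Rightarrow> 'g::ab_group_add" and w :: "'a \<Rightarrow> 'b::ordered_ab_group_add"
  assumes B: "basis indep B" "\<forall>B'. basis indep B' \<longrightarrow> sum w B \<le> sum w B'" "sum \<psi> B = 0"
    and Bs: "basis indep Bs" "nonzero \<psi> Bs"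
  shows "\<exists>T. basis indep T \<and> nonzero \<psi> T \<and> sum w T \<le> sum w Bs \<and>
           (card (B - T) < card (B - Bs) \<or> card (B - T) \<le> 1)"
proof -
  have fin_B: "finite B" and fin_Bs: "finite Bs"
    using B(1) Bs(1) indep_finite unfolding basis_def by auto
  have "\<not> Bs \<subseteq> B"
  proof
    assume "Bs \<subseteq> B"
    then have "B = Bs" using B(1) Bs(1) unfolding basis_def by blast
    then show False using B(3) Bs(2) unfolding nonzero_def by simp
  qed
  then obtain x where x: "x \<in> Bs" "x \<notin> B" by blast
  then obtain y where y: "y \<in> B - Bs"
    and T: "basis indep (insert y (Bs - {x}))" and B': "basis indep (insert x (B - {y}))"
    using basis_exchange_symmetric[OF Bs(1) B(1)] by blast
  define T where "T = insert y (Bs - {x})"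
  define B' where "B' = insert x (B - {y})"
  have sum_T: "sum f T = sum f Bs - f x + f y" for f :: "'a \<Rightarrow> 'c::ab_group_add"
    unfolding T_def by (rule sum_insert_remove[OF fin_Bs x(1)]) (use y in blast)
  have sum_B': "sum f B' = sum f B - f y + f x" for f :: "'a \<Rightarrow> 'c::ab_group_add"
    unfolding B'_def by (rule sum_insert_remove[OF fin_B _ x(2)]) (use y in blast)
  have "sum w B \<le> sum w B'" "sum w B \<le> sum w T"
    using B(2) T B' unfolding T_def B'_def by blast+
  then have weights: "sum w T \<le> sum w Bs" "sum w B' \<le> sum w Bs"
    unfolding sum_T sum_B' by (simp_all add: algebra_simps)
  have "sum \<psi> T + sum \<psi> B' = sum \<psi> Bs"
    unfolding sum_T sum_B' using B(3) by (simp add: algebra_simps)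
  then consider "nonzero \<psi> T" | "nonzero \<psi> B'"
    using Bs(2) unfolding nonzero_def by force
  then show ?thesis
  proof cases
    case 1
    have "B - T = (B - Bs) - {y}" unfolding T_def using x by blast
    then have "card (B - T) < card (B - Bs)"
      using card_Diff1_less[of "B - Bs" y] y fin_B by simp
    then show ?thesis using 1 T weights T_def by blast
  next
    case 2
    have "B - B' = {y}" unfolding B'_def using x y by blast
    then show ?thesis using 2 B' weights B'_def by (intro exI[of _ B']) auto
  qed
qed

end

theorem lemma3p2:
  fixes E :: "'a set" and indep :: "'a set \<Rightarrow> bool"
    and \<psi> :: "'a \<Rightarrow> 'g::ab_group_add" and w :: "'a \<Rightarrow> real"
  assumes "matroid E indep"
    and "\<exists>B0. basis indep B0 \<and> nonzero \<psi> B0"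
    and "basis indep B"
    and "\<forall>B'. basis indep B' \<longrightarrow> (\<Sum>x\<in>B. w x) \<le> (\<Sum>x\<in>B'. w x)"
  shows "\<exists>Bs. basis indep Bs \<and> nonzero \<psi> Bs \<and>
           (\<forall>B'. basis indep B' \<and> nonzero \<psi> B' \<longrightarrow> (\<Sum>x\<in>Bs. w x) \<le> (\<Sum>x\<in>B'. w x)) \<and>
           card (B - Bs) \<le> 1"
proof -
  interpret finite_matroid E indep by (fact finite_matroid.intro[OF assms(1)])
  let ?NZ = "{X. basis indep X \<and> nonzero \<psi> X}"
  have "finite ?NZ" using finite_bases by (rule rev_finite_subset) auto
  then obtain B1 where B1: "is_arg_min (sum w) (\<lambda>X. X \<in> ?NZ) B1"
    using ex_is_arg_min_if_finite assms(2) by blast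
  define opt where "opt X \<longleftrightarrow> X \<in> ?NZ \<and> sum w X \<le> sum w B1" for X
  have opt_iff: "opt X \<longleftrightarrow> basis indep X \<and> nonzero \<psi> X \<and>
      (\<forall>B'. basis indep B' \<and> nonzero \<psi> B' \<longrightarrow> sum w X \<le> sum w B')" for X
    using B1 unfolding opt_def is_arg_min_linorder by force
  obtain Bs where Bs: "opt Bs" and closest: "\<forall>X. opt X \<longrightarrow> card (B - Bs) \<le> card (B - X)"
    using ex_has_least_nat[of opt B1 "\<lambda>X. card (B - X)"] B1
    unfolding opt_def is_arg_min_linorder by blast
  show ?thesis
  proof (cases "nonzero \<psi> B")
    case True
    then have "opt B" using assms(3,4) B1 unfolding opt_def is_arg_min_linorder by auto
    then show ?thesis using opt_iff by auto
  next
    case False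
    have "basis indep Bs" "nonzero \<psi> Bs" using Bs unfolding opt_def by auto
    then obtain T where "basis indep T" "nonzero \<psi> T" "sum w T \<le> sum w Bs"
      and closer: "card (B - T) < card (B - Bs) \<or> card (B - T) \<le> 1"
      using False nonzero_basis_exchange_step[OF assms(3,4)] unfolding nonzero_def by blast
    then have "opt T" using Bs unfolding opt_def by auto
    then have "card (B - T) \<le> 1" using closer closest by (meson leD)
    then show ?thesis using \<open>opt T\<close> opt_iff by blast
  qed
qed

end
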